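(* Let $l\in\{0,1,2,\dots\}$, let $\alpha,\beta,\gamma\in\mathbb{C}$ with $\mathrm{Re}\,\beta+l>-1$, such that all gamma functions and hypergeometric functions below are well-defined, and let $\rho\in\mathbb{R}\setminus\{0\}$. For $\delta\in\mathbb{C}$ and $z\neq0$ let $$f(\alpha,\beta,\gamma,\delta;z)=\sum_{\nu=0}^{\infty}\frac{z^{-\nu}\Gamma(\alpha+\gamma+\nu)}{\nu!\,\Gamma(\beta+\nu)}\,E\left(\begin{matrix}\alpha+1,&\beta+\nu\\ \delta,&\beta+1+\nu\end{matrix};z\right).$$ Then $$\int_0^{\rho}t^{\beta+l}E(\alpha;\beta;i/t)E(\alpha+\gamma;\beta;-i/t)\,dt=\rho^{\beta+l+1}\sum_{n=0}^{l+1}\frac{(-i\rho)^n\,\Gamma(\beta+l+1)}{\Gamma(\beta+n)}\binom{l+1}{n}f\left(\alpha-1,\beta+l+n+1,\gamma+n+1,\beta;\frac{i}{\rho}\right).$$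
   Context: For complex parameters $a_1,\dots,a_p$, $b_1,\dots,b_q$ with $p\le q$ and $z\in\mathbb{C}\setminus\{0\}$, the MacRobert $E$-function is $$E\left(\begin{matrix}a_1,\dots,a_p\\ b_1,\dots,b_q\end{matrix};z\right)=\frac{\prod_{j=1}^p\Gamma(a_j)}{\prod_{j=1}^q\Gamma(b_j)}\,{}_pF_q\left(\begin{matrix}a_1,\dots,a_p\\ b_1,\dots,b_q\end{matrix};-\frac1z\right),$$ where ${}_pF_q$ is the generalized hypergeometric function. In particular $E(a;b;z)=\frac{\Gamma(a)}{\Gamma(b)}\,{}_1F_1(a;b;-1/z)$. *)

theory Defs
  imports "HOL-Analysis.Analysis"
begin

definition hypergeom :: "complex list \<Rightarrow> complex list \<Rightarrow> complex \<Rightarrow> complex" where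
  "hypergeom as bs z =
     (\<Sum>k. (\<Prod>a\<leftarrow>as. pochhammer a k) / (\<Prod>b\<leftarrow>bs. pochhammer b k) * z ^ k / fact k)"

definition macrobertE :: "complex list \<Rightarrow> complex list \<Rightarrow> complex \<Rightarrow> complex" where
  "macrobertE as bs z =
     (\<Prod>a\<leftarrow>as. Gamma a) / (\<Prod>b\<leftarrow>bs. Gamma b) * hypergeom as bs (- 1 / z)"

definition fE :: "complex \<Rightarrow> complex \<Rightarrow> complex \<Rightarrow> complex \<Rightarrow> complex \<Rightarrow> complex" where
  "fE \<alpha> \<beta> \<gamma> \<delta> z =
     (\<Sum>\<nu>. (inverse z) ^ \<nu> * Gamma (\<alpha> + \<gamma> + of_nat \<nu>) / (fact \<nu> * Gamma (\<beta> + of_nat \<nu>))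
           * macrobertE [\<alpha> + 1, \<beta> + of_nat \<nu>] [\<delta>, \<beta> + 1 + of_nat \<nu>] z)"

definition has_oriented_integral :: "(real \<Rightarrow> complex) \<Rightarrow> real \<Rightarrow> real \<Rightarrow> complex \<Rightarrow> bool" where
  "has_oriented_integral g a b I =
     (if a \<le> b then (g has_integral I) {a..b} else (g has_integral (- I)) {b..a})"

end

theory Submission
  imports Defs
begin

text \<open>
  Both E-functions are entire power series in \<open>t\<close>:
  \<open>E(\<alpha>; \<beta>; \<i>/t) = \<Gamma>(\<alpha>)/\<Gamma>(\<beta>) \<Sum>\<^sub>j (\<alpha>)\<^sub>j/((\<beta>)\<^sub>j j!) (\<i>t)\<^sup>j\<close>, and likewise with
  \<open>\<alpha> + \<gamma>\<close> and \<open>-\<i>t\<close>. Integrating \<open>t\<^sup>w\<^sup>-\<^sup>1\<close> (\<open>w = \<beta> + l + 1\<close>) times their Cauchy product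
  termwise gives \<open>\<rho>\<^sup>w\<close> times a double series over \<open>k, j\<close> with denominators \<open>w + k + j\<close>.
  The Chu--Vandermonde identity \<open>(w)\<^sub>k/((\<beta>)\<^sub>k k!) = \<Sum>\<^sub>n C(l+1,n)/((\<beta>)\<^sub>n (k-n)!)\<close> splits
  the coefficients of the second series into \<open>l + 2\<close> pieces. In the \<open>n\<close>-th piece, writing
  \<open>k = n + \<nu>\<close>, the sum over \<open>j\<close> is an \<open>E(\<alpha>, c; \<beta>, c + 1; \<i>/\<rho>)\<close> with \<open>c = w + n + \<nu>\<close>,
  because \<open>(c)\<^sub>j/(c + 1)\<^sub>j = c/(c + j)\<close>; the remaining sum over \<open>\<nu>\<close> is the \<open>n\<close>-th \<open>f\<close>-term.
\<close>

lemma summable_ratio_tendsto_0: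
  fixes f r :: "nat \<Rightarrow> real"
  assumes rec: "\<And>k. f (Suc k) = r k * f k" and lim: "r \<longlonglongrightarrow> 0"
  shows "summable f"
proof -
  have "eventually (\<lambda>k. dist (r k) 0 < 1/2) sequentially"
    using lim by (rule tendstoD) simp
  then obtain N where N: "\<And>k. k \<ge> N \<Longrightarrow> \<bar>r k\<bar> < 1/2"
    by (auto simp: eventually_sequentially)
  show ?thesis
  proof (rule summable_ratio_test[of "1/2" N])
    fix n assume "n \<ge> N"
    then have "\<bar>r n\<bar> * \<bar>f n\<bar> \<le> 1/2 * \<bar>f n\<bar>" using N[of n] by (intro mult_right_mono) auto
    then show "norm (f (Suc n)) \<le> 1/2 * norm (f n)" by (simp add: rec abs_mult)
  qed simp
qed

lemma hyp_term_ratio_tendsto_0: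
  fixes p q :: complex and c :: real
  shows "(\<lambda>k. norm (p + of_nat k) * c / (norm (q + of_nat k) * (of_nat k + 1))) \<longlonglongrightarrow> 0"
proof -
  have inf: "filterlim (\<lambda>k. q + of_nat k :: complex) at_infinity sequentially"
    by (intro tendsto_add_filterlim_at_infinity[OF tendsto_const] tendsto_of_nat)
  have "(\<lambda>k. 1 + (p - q) / (q + of_nat k)) \<longlonglongrightarrow> 1 + 0"
    by (intro tendsto_intros tendsto_divide_0[OF tendsto_const inf])
  moreover have "eventually (\<lambda>k. 1 + (p - q) / (q + of_nat k) = (p + of_nat k) / (q + of_nat k)) sequentially"
  proof -
    have "eventually (\<lambda>k. norm (q + of_nat k) \<ge> 1) sequentially"
      using filterlim_at_infinity_imp_norm_at_top[OF inf] by (simp add: filterlim_at_top)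
    then show ?thesis
    proof eventually_elim
      case (elim k)
      then have "q + of_nat k \<noteq> 0" by auto
      then show ?case by (simp add: field_simps)
    qed
  qed
  ultimately have "(\<lambda>k. (p + of_nat k) / (q + of_nat k)) \<longlonglongrightarrow> 1"
    using Lim_transform_eventually by fastforce
  then have "(\<lambda>k. norm ((p + of_nat k) / (q + of_nat k)) * (c * inverse (of_nat k + 1)))
               \<longlonglongrightarrow> norm (1::complex) * (c * 0)"
    using LIMSEQ_inverse_real_of_nat by (intro tendsto_intros) (simp_all add: add.commute)
  then show ?thesis by (simp add: norm_divide field_simps)
qed

definition hyp_term :: "complex \<Rightarrow> complex \<Rightarrow> complex \<Rightarrow> nat \<Rightarrow> complex" where
  "hyp_term p q z k = pochhammer p k / pochhammer q k * z ^ k / fact k"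

lemma summable_norm_hyp_term: "summable (\<lambda>k. norm (hyp_term p q z k))"
proof (rule summable_ratio_tendsto_0)
  fix k
  show "norm (hyp_term p q z (Suc k)) =
          norm (p + of_nat k) * norm z / (norm (q + of_nat k) * (of_nat k + 1)) * norm (hyp_term p q z k)"
    by (simp add: hyp_term_def pochhammer_Suc norm_mult norm_divide norm_power norm_inverse divide_inverse ac_simps
        del: of_nat_Suc)
qed (rule hyp_term_ratio_tendsto_0)

lemma hyp_term_mult_power: "hyp_term p q (z * y) k = hyp_term p q z k * y ^ k"
  by (simp add: hyp_term_def power_mult_distrib)

lemma summable_norm_hyp_term_mult_power: "summable (\<lambda>k. norm (hyp_term p q z k * y ^ k))"
  unfolding hyp_term_mult_power[symmetric] by (rule summable_norm_hyp_term)

lemma hypergeom_single: "hypergeom [p] [q] z = (\<Sum>k. hyp_term p q z k)"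
  by (simp add: hypergeom_def hyp_term_def)

lemma Re_pos_not_nonpos_Ints: "Re z > 0 \<Longrightarrow> z \<notin> \<int>\<^sub>\<le>\<^sub>0"
  by (auto elim!: nonpos_Ints_cases)

lemma norm_divide_add_of_nat_le:
  assumes "Re c > 0"
  shows "norm (x / (c + of_nat j)) \<le> norm x / Re c"
proof -
  have "Re c \<le> norm (c + of_nat j)"
    using complex_Re_le_cmod[of "c + of_nat j"] by simp
  with assms show ?thesis by (simp add: norm_divide frac_le)
qed

lemma summable_norm_divide_add_of_nat:
  assumes "Re c > 0" and "summable (\<lambda>j. norm (f j))"
  shows "summable (\<lambda>j. norm (f j / (c + of_nat (k + j))))"
proof (rule summable_comparison_test'[OF summable_divide[OF assms(2), of "Re c"]])
  show "norm (norm (f j / (c + of_nat (k + j)))) \<le> norm (f j) / Re c" for j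
    using norm_divide_add_of_nat_le[OF assms(1), of "f j" "k + j"] by simp
qed

lemma summable_hyp_term_divide:
  assumes "Re c > 0"
  shows "summable (\<lambda>j. hyp_term p q z j / (c + of_nat (k + j)))"
  using summable_norm_divide_add_of_nat[OF assms summable_norm_hyp_term] by (rule summable_norm_cancel)

lemma macrobertE_shifted_pair:
  assumes c: "Re c > 0"
  shows "macrobertE [a, c] [q, c + 1] y =
           Gamma a / Gamma q * (\<Sum>j. hyp_term a q (- 1 / y) j / (c + of_nat j))"
proof -
  define z where "z = - 1 / y"
  have c_nonpos: "c \<notin> \<int>\<^sub>\<le>\<^sub>0" using c by (rule Re_pos_not_nonpos_Ints)
  have "c \<noteq> 0" using c by auto
  have "c + of_nat j \<noteq> 0" for j using c by (auto simp: complex_eq_iff)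
  moreover have "pochhammer (c + 1) j \<noteq> 0" for j
    using Re_pos_not_nonpos_Ints[of "c + 1"] c pochhammer_eq_0_imp_nonpos_Int by force
  moreover have "pochhammer c j * (c + of_nat j) = c * pochhammer (c + 1) j" for j
    using pochhammer_rec[of c j] pochhammer_Suc[of c j] by simp
  ultimately have ratio: "pochhammer c j / pochhammer (c + 1) j = c / (c + of_nat j)" for j
    by (simp add: field_simps)
  have "hypergeom [a, c] [q, c + 1] z = (\<Sum>j. c * (hyp_term a q z j / (c + of_nat j)))"
    unfolding hypergeom_def
  proof (rule suminf_cong)
    fix j
    have "pochhammer a j * pochhammer c j / (pochhammer q j * pochhammer (c + 1) j) =
            pochhammer a j / pochhammer q j * (pochhammer c j / pochhammer (c + 1) j)"
      by simp
    then show "(\<Prod>b\<leftarrow>[a, c]. pochhammer b j) / (\<Prod>b\<leftarrow>[q, c + 1]. pochhammer b j) * z ^ j / fact j =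
                 c * (hyp_term a q z j / (c + of_nat j))"
      unfolding ratio hyp_term_def by (simp add: ac_simps)
  qed
  also have "\<dots> = c * (\<Sum>j. hyp_term a q z j / (c + of_nat j))"
    using suminf_mult[OF summable_hyp_term_divide[OF c, of a q z 0]] by simp
  finally show ?thesis
    unfolding macrobertE_def z_def[symmetric]
    using Gamma_plus1[OF c_nonpos] \<open>c \<noteq> 0\<close> Gamma_eq_zero_iff[of c] c_nonpos
    by (simp add: field_simps)
qed

lemma summable_on_dominated_by_product:
  fixes f :: "nat \<Rightarrow> nat \<Rightarrow> complex" and u v :: "nat \<Rightarrow> real"
  assumes "summable u" and "summable v" and "\<And>k. u k \<ge> 0" and "\<And>j. v j \<ge> 0"
    and "\<And>k j. norm (f k j) \<le> u k * v j"
  shows "(\<lambda>(k, j). f k j) summable_on UNIV"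
proof -
  have u: "(u has_sum suminf u) UNIV" and v: "(v has_sum suminf v) UNIV"
    using assms(1-4) by (auto intro: sums_nonneg_imp_has_sum summable_sums)
  have "(\<lambda>(k, j). u k * v j) summable_on Sigma UNIV (\<lambda>_. UNIV)"
  proof (rule summable_on_SigmaI)
    show "((\<lambda>j. case (k, j) of (k, j) \<Rightarrow> u k * v j) has_sum (u k * suminf v)) UNIV" for k
      using has_sum_cmult_right[OF v, of "u k"] by simp
    show "(\<lambda>k. u k * suminf v) summable_on UNIV"
      using has_sum_cmult_left[OF u, of "suminf v"] by (auto simp: summable_on_def)
  qed (auto intro!: mult_nonneg_nonneg assms(3,4))
  then have "(\<lambda>x. norm (case x of (k, j) \<Rightarrow> f k j)) summable_on UNIV \<times> UNIV"
    by (rule summable_on_comparison_test) (auto simp: assms(5))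
  then show ?thesis
    unfolding UNIV_Times_UNIV by (rule abs_summable_summable)
qed

lemma sums_diagonal_suminf_suminf:
  fixes f :: "nat \<Rightarrow> nat \<Rightarrow> complex" and u v :: "nat \<Rightarrow> real"
  assumes "summable u" and "summable v" and "\<And>k. u k \<ge> 0" and "\<And>j. v j \<ge> 0"
    and dom: "\<And>k j. norm (f k j) \<le> u k * v j"
  shows "(\<lambda>m. \<Sum>i\<le>m. f i (m - i)) sums (\<Sum>k. \<Sum>j. f k j)"
proof -
  define F where "F = (\<lambda>(k, j). f k j)"
  define S where "S = infsum F UNIV"
  have S: "(F has_sum S) (UNIV \<times> UNIV)"
    using summable_on_dominated_by_product[OF assms] by (simp add: F_def S_def has_sum_infsum)
  have "((\<lambda>j. F (k, j)) has_sum (\<Sum>j. f k j)) UNIV" for k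
  proof -
    have "summable (\<lambda>j. norm (f k j))"
      by (rule summable_comparison_test'[OF summable_mult[OF assms(2), of "u k"]]) (use dom in auto)
    then show ?thesis
      unfolding F_def using norm_summable_imp_has_sum summable_norm_cancel summable_sums by fastforce
  qed
  then have "((\<lambda>k. \<Sum>j. f k j) has_sum S) UNIV"
    by (rule has_sum_Sigma'[OF S])
  then have rows: "(\<lambda>k. \<Sum>j. f k j) sums S"
    by (rule has_sum_imp_sums)
  have "((\<lambda>(m, i). f i (m - i)) has_sum S) (Sigma UNIV (\<lambda>m. {..m}))"
    using S unfolding F_def by (subst has_sum_reindex_bij_witness[where j = "\<lambda>(k, l). (k + l, k)"
                  and i = "\<lambda>(m, t). (t, m - t)", symmetric]) auto
  then have "((\<lambda>m. \<Sum>i\<le>m. f i (m - i)) has_sum S) UNIV"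
    by (rule has_sum_Sigma') auto
  then have "(\<lambda>m. \<Sum>i\<le>m. f i (m - i)) sums S"
    by (rule has_sum_imp_sums)
  with rows show ?thesis
    by (simp add: sums_iff)
qed

lemma has_vector_derivative_of_real_powr:
  fixes w :: complex and t :: real
  assumes "t \<noteq> 0"
  shows "((\<lambda>t. complex_of_real t powr w) has_vector_derivative (w * complex_of_real t powr (w - 1))) (at t)"
proof (cases "t > 0")
  case True
  then have "complex_of_real t \<notin> \<real>\<^sub>\<le>\<^sub>0" by (auto simp: complex_nonpos_Reals_iff)
  from has_field_derivative_powr[OF this, of w] show ?thesis
    by (rule has_vector_derivative_real_field)
next
  case False
  with assms have t: "t < 0" by simp
  have neg: "complex_of_real u powr v = (-1) powr v * (- complex_of_real u) powr v" if "u < 0" for u v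
    using powr_neg_real_complex[of "-u" v] that by simp
  have minus_one: "(-1::complex) powr (w - 1) = - ((-1) powr w)"
    by (simp add: powr_def algebra_simps exp_diff)
  have "- complex_of_real t \<notin> \<real>\<^sub>\<le>\<^sub>0" using t by (auto simp: complex_nonpos_Reals_iff)
  then have "((\<lambda>z. (-1) powr w * (-z) powr w) has_field_derivative
               ((-1) powr w * (w * (- complex_of_real t) powr (w - 1) * (-1)))) (at (complex_of_real t))"
    by (auto intro!: derivative_eq_intros)
  then have "((\<lambda>u. (-1) powr w * (- complex_of_real u) powr w) has_vector_derivative
               ((-1) powr w * (w * (- complex_of_real t) powr (w - 1) * (-1)))) (at t)"
    by (rule has_vector_derivative_real_field)
  moreover have "(-1) powr w * (w * (- complex_of_real t) powr (w - 1) * (-1)) = w * complex_of_real t powr (w - 1)"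
    using neg[OF t, of "w - 1"] minus_one by simp
  ultimately have "((\<lambda>u. (-1) powr w * (- complex_of_real u) powr w) has_vector_derivative
               (w * complex_of_real t powr (w - 1))) (at t)"
    by simp
  then show ?thesis
    by (rule has_vector_derivative_transform_within_open[where S = "{..<0}"]) (use t neg in auto)
qed

lemma isCont_of_real_powr:
  fixes w :: complex and t :: real
  assumes "Re w > 0"
  shows "isCont (\<lambda>t. complex_of_real t powr w) t"
proof (cases "t = 0")
  case True
  have "((\<lambda>t. complex_of_real t powr w) \<longlongrightarrow> 0) (at 0)"
    by (rule tendsto_powr_complex_0) (use assms in \<open>auto intro!: tendsto_eq_intros\<close>)
  then show ?thesis using True by (simp add: isCont_def)
next
  case False
  then show ?thesis
    using has_vector_derivative_of_real_powr has_vector_derivative_continuous by blast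
qed

text \<open>The coefficients of \<open>G\<close> with \<open>(t\<^sup>w G(t))' = t\<^sup>w\<^sup>-\<^sup>1 B(t) A(t)\<close>, where
  \<open>A(t) = \<Sum> a\<^sub>j t\<^sup>j\<close>, \<open>B(t) = \<Sum> b\<^sub>k t\<^sup>k\<close>: termwise integration of the Cauchy product.\<close>
definition antideriv_coeff :: "(nat \<Rightarrow> complex) \<Rightarrow> (nat \<Rightarrow> complex) \<Rightarrow> complex \<Rightarrow> nat \<Rightarrow> complex" where
  "antideriv_coeff a b w m = (\<Sum>i\<le>m. b i * a (m - i)) / (w + of_nat m)"

lemma sums_antideriv_coeff:
  assumes w: "Re w > 0"
    and a: "summable (\<lambda>j. norm (a j * y ^ j))" and b: "summable (\<lambda>k. norm (b k * y ^ k))"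
  shows "(\<lambda>m. antideriv_coeff a b w m * y ^ m) sums
           (\<Sum>k. \<Sum>j. b k * a j * y ^ (k + j) / (w + of_nat (k + j)))"
proof -
  have "(\<lambda>m. \<Sum>i\<le>m. b i * a (m - i) * y ^ (i + (m - i)) / (w + of_nat (i + (m - i)))) sums
          (\<Sum>k. \<Sum>j. b k * a j * y ^ (k + j) / (w + of_nat (k + j)))"
  proof (rule sums_diagonal_suminf_suminf[where u = "\<lambda>k. norm (b k * y ^ k)"
                                          and v = "\<lambda>j. norm (a j * y ^ j) / Re w"])
    fix k j
    have "norm (b k * a j * y ^ (k + j) / (w + of_nat (k + j))) =
            norm ((b k * y ^ k) * (a j * y ^ j) / (w + of_nat (k + j)))"
      by (simp add: power_add ac_simps)
    also have "\<dots> \<le> norm ((b k * y ^ k) * (a j * y ^ j)) / Re w"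
      by (rule norm_divide_add_of_nat_le[OF w])
    finally show "norm (b k * a j * y ^ (k + j) / (w + of_nat (k + j))) \<le>
                    norm (b k * y ^ k) * (norm (a j * y ^ j) / Re w)"
      by (simp add: norm_mult)
  qed (use a b w in \<open>auto intro: summable_divide\<close>)
  moreover have "(\<Sum>i\<le>m. b i * a (m - i) * y ^ (i + (m - i)) / (w + of_nat (i + (m - i)))) =
                   antideriv_coeff a b w m * y ^ m" for m
    unfolding antideriv_coeff_def by (simp add: sum_divide_distrib sum_distrib_right)
  ultimately show ?thesis by simp
qed

lemma antideriv_coeff_series_equation:
  assumes w: "Re w > 0"
    and a: "\<And>y. summable (\<lambda>j. norm (a j * y ^ j))" and b: "\<And>y. summable (\<lambda>k. norm (b k * y ^ k))"
  defines "d \<equiv> antideriv_coeff a b w"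
  shows "T * (\<Sum>m. diffs d m * T ^ m) + w * (\<Sum>m. d m * T ^ m) = (\<Sum>k. b k * T ^ k) * (\<Sum>j. a j * T ^ j)"
proof -
  have d: "summable (\<lambda>m. d m * y ^ m)" for y
    unfolding d_def using sums_antideriv_coeff[OF w a b] by (rule sums_summable)
  have "(\<lambda>n. T * (diffs d n * T ^ n)) sums (T * (\<Sum>m. diffs d m * T ^ m))"
    by (rule sums_mult[OF summable_sums[OF termdiff_converges_all[OF d]]])
  then have "(\<lambda>n. of_nat (Suc n) * d (Suc n) * T ^ Suc n) sums (T * (\<Sum>m. diffs d m * T ^ m))"
    by (simp add: diffs_def ac_simps)
  then have "(\<lambda>n. of_nat n * d n * T ^ n) sums (T * (\<Sum>m. diffs d m * T ^ m))"
    by (subst (asm) sums_Suc_iff) simp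
  moreover have "(\<lambda>n. w * (d n * T ^ n)) sums (w * (\<Sum>m. d m * T ^ m))"
    by (rule sums_mult[OF summable_sums[OF d]])
  ultimately have "(\<lambda>n. of_nat n * d n * T ^ n + w * (d n * T ^ n)) sums
                     (T * (\<Sum>m. diffs d m * T ^ m) + w * (\<Sum>m. d m * T ^ m))"
    by (rule sums_add)
  moreover have "of_nat n * d n * T ^ n + w * (d n * T ^ n) =
                   (\<Sum>i\<le>n. (b i * T ^ i) * (a (n - i) * T ^ (n - i)))" for n
  proof -
    have "w + of_nat n \<noteq> 0" using w by (auto simp: complex_eq_iff)
    have "of_nat n * d n * T ^ n + w * (d n * T ^ n) = (w + of_nat n) * d n * T ^ n"
      by (simp add: algebra_simps)
    also have "\<dots> = (\<Sum>i\<le>n. b i * a (n - i)) * T ^ n"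
      using \<open>w + of_nat n \<noteq> 0\<close> by (simp add: d_def antideriv_coeff_def)
    also have "\<dots> = (\<Sum>i\<le>n. b i * a (n - i) * T ^ (i + (n - i)))"
      by (simp add: sum_distrib_right)
    also have "\<dots> = (\<Sum>i\<le>n. (b i * T ^ i) * (a (n - i) * T ^ (n - i)))"
      by (simp only: power_add mult_ac)
    finally show ?thesis .
  qed
  moreover have "(\<lambda>n. \<Sum>i\<le>n. (b i * T ^ i) * (a (n - i) * T ^ (n - i))) sums
                   ((\<Sum>k. b k * T ^ k) * (\<Sum>j. a j * T ^ j))"
    by (rule Cauchy_product_sums[OF b a])
  ultimately show ?thesis
    using sums_unique2 by force
qed

lemma has_vector_derivative_powr_antideriv:
  fixes t :: real
  assumes w: "Re w > 0" and t: "t \<noteq> 0"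
    and a: "\<And>y. summable (\<lambda>j. norm (a j * y ^ j))" and b: "\<And>y. summable (\<lambda>k. norm (b k * y ^ k))"
  shows "((\<lambda>t. complex_of_real t powr w * (\<Sum>m. antideriv_coeff a b w m * complex_of_real t ^ m))
           has_vector_derivative
           (complex_of_real t powr (w - 1) *
              ((\<Sum>k. b k * complex_of_real t ^ k) * (\<Sum>j. a j * complex_of_real t ^ j)))) (at t)"
proof -
  define T where "T = complex_of_real t"
  define d where "d = antideriv_coeff a b w"
  have "summable (\<lambda>m. d m * y ^ m)" for y
    unfolding d_def using sums_antideriv_coeff[OF w a b] by (rule sums_summable)
  then have "((\<lambda>y. \<Sum>m. d m * y ^ m) has_field_derivative (\<Sum>m. diffs d m * T ^ m)) (at T)"
    by (rule termdiffs_strong_converges_everywhere)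
  from has_vector_derivative_mult[OF has_vector_derivative_of_real_powr[OF t, of w]
         has_vector_derivative_real_field[OF this[unfolded T_def]]]
  have "((\<lambda>t. complex_of_real t powr w * (\<Sum>m. d m * complex_of_real t ^ m)) has_vector_derivative
          (T powr w * (\<Sum>m. diffs d m * T ^ m) + w * T powr (w - 1) * (\<Sum>m. d m * T ^ m))) (at t)"
    by (simp add: T_def)
  moreover have "T powr w * (\<Sum>m. diffs d m * T ^ m) + w * T powr (w - 1) * (\<Sum>m. d m * T ^ m) =
                   T powr (w - 1) * (T * (\<Sum>m. diffs d m * T ^ m) + w * (\<Sum>m. d m * T ^ m))"
    using powr_add[of T "w - 1" 1] by (simp add: algebra_simps)
  ultimately show ?thesis
    using antideriv_coeff_series_equation[OF w a b, of T] by (simp add: d_def T_def)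
qed

lemma has_oriented_integral_powr_series_product:
  fixes a b :: "nat \<Rightarrow> complex" and g :: "real \<Rightarrow> complex"
  assumes w: "Re w > 0"
    and a: "\<And>y. summable (\<lambda>j. norm (a j * y ^ j))" and b: "\<And>y. summable (\<lambda>k. norm (b k * y ^ k))"
    and g: "\<And>t. t \<noteq> 0 \<Longrightarrow> g t = K * (complex_of_real t powr (w - 1) *
                 ((\<Sum>k. b k * complex_of_real t ^ k) * (\<Sum>j. a j * complex_of_real t ^ j)))"
  shows "has_oriented_integral g 0 \<rho>
           (K * (complex_of_real \<rho> powr w * (\<Sum>m. antideriv_coeff a b w m * complex_of_real \<rho> ^ m)))"
proof -
  define F where
    "F t = K * (complex_of_real t powr w * (\<Sum>m. antideriv_coeff a b w m * complex_of_real t ^ m))" for t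
  have "summable (\<lambda>m. antideriv_coeff a b w m * y ^ m)" for y
    using sums_antideriv_coeff[OF w a b] by (rule sums_summable)
  then have "isCont (\<lambda>t. \<Sum>m. antideriv_coeff a b w m * complex_of_real t ^ m) x" for x
    using has_vector_derivative_continuous[OF has_vector_derivative_real_field]
          termdiffs_strong_converges_everywhere by blast
  then have "isCont F x" for x
    unfolding F_def by (intro continuous_intros isCont_of_real_powr[OF w])
  then have F_cont: "continuous_on S F" for S
    by (simp add: continuous_at_imp_continuous_on)
  have F_deriv: "(F has_vector_derivative g x) (at x)" if "x \<noteq> 0" for x
    unfolding F_def g[OF that]
    by (rule has_vector_derivative_mult_right[OF has_vector_derivative_powr_antideriv[OF w that a b]])
  have "F 0 = 0" by (simp add: F_def)
  show ?thesis
  proof (cases "0 \<le> \<rho>")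
    case True
    have "(g has_integral (F \<rho> - F 0)) {0..\<rho>}"
      by (rule fundamental_theorem_of_calculus_interior[OF True F_cont]) (auto intro!: F_deriv)
    then show ?thesis using True \<open>F 0 = 0\<close> by (simp add: has_oriented_integral_def F_def)
  next
    case False
    have "(g has_integral (F 0 - F \<rho>)) {\<rho>..0}"
      by (rule fundamental_theorem_of_calculus_interior) (use False in \<open>auto intro!: F_deriv F_cont\<close>)
    then show ?thesis using False \<open>F 0 = 0\<close> by (simp add: has_oriented_integral_def F_def)
  qed
qed

lemma Suc_choose_Suc_mult_fact:
  "(of_nat (Suc k choose Suc n) * fact (Suc n) :: 'a::semiring_char_0) =
     of_nat (Suc k) * of_nat (k choose n) * fact n"
proof -
  have "(Suc k choose Suc n) * Suc n = Suc k * (k choose n)"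
    using Suc_times_binomial_eq[of k n] by simp
  then have "(of_nat (Suc k choose Suc n) :: 'a) * of_nat (Suc n) = of_nat (Suc k) * of_nat (k choose n)"
    by (metis of_nat_mult)
  then show ?thesis
    by (simp only: fact_Suc mult.assoc[symmetric])
qed

text \<open>The Chu--Vandermonde identity \<open>\<^sub>2F\<^sub>1(-L, -k; b; 1) = (b + L)\<^sub>k / (b)\<^sub>k\<close>,
  multiplied through by \<open>(b)\<^sub>k\<close>.\<close>
lemma pochhammer_add_of_nat_eq_sum:
  fixes b :: "'a::field_char_0"
  shows "pochhammer (b + of_nat L) k =
           (\<Sum>n\<le>k. of_nat (L choose n) * of_nat (k choose n) * fact n * pochhammer (b + of_nat n) (k - n))"
proof (induction L arbitrary: b k)
  case 0
  then show ?case by (simp add: sum.atMost_shift)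
next
  case (Suc L)
  show ?case
  proof (cases k)
    case 0
    then show ?thesis by simp
  next
    case (Suc k')
    define X where "X n = of_nat (Suc k' choose n) * fact n * pochhammer (b + of_nat n) (Suc k' - n)" for n
    have X_Suc: "X (Suc n) = of_nat (Suc k') *
                   (of_nat (k' choose n) * fact n * pochhammer ((b + 1) + of_nat n) (k' - n))" for n
      unfolding X_def mult.assoc[symmetric] Suc_choose_Suc_mult_fact by (simp add: ac_simps)
    have "(\<Sum>n\<le>Suc k'. of_nat (Suc L choose n) * X n)
        = X 0 + (\<Sum>n\<le>k'. of_nat (L choose Suc n) * X (Suc n)) + (\<Sum>n\<le>k'. of_nat (L choose n) * X (Suc n))"
      by (subst sum.atMost_Suc_shift) (simp add: sum.distrib algebra_simps)
    also have "X 0 + (\<Sum>n\<le>k'. of_nat (L choose Suc n) * X (Suc n)) = (\<Sum>n\<le>Suc k'. of_nat (L choose n) * X n)"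
      by (subst sum.atMost_Suc_shift) simp
    also have "\<dots> = pochhammer (b + of_nat L) (Suc k')"
      using Suc.IH[of b "Suc k'"] by (simp add: X_def mult.assoc)
    also have "(\<Sum>n\<le>k'. of_nat (L choose n) * X (Suc n)) = of_nat (Suc k') * pochhammer (b + 1 + of_nat L) k'"
      using Suc.IH[of "b + 1" k'] by (simp add: X_Suc sum_distrib_left ac_simps)
    also have "pochhammer (b + of_nat L) (Suc k') + of_nat (Suc k') * pochhammer (b + 1 + of_nat L) k' =
                 pochhammer (b + of_nat (Suc L)) (Suc k')"
    proof -
      have "pochhammer (b + of_nat L) (Suc k') = (b + of_nat L) * pochhammer (b + 1 + of_nat L) k'"
        by (simp add: pochhammer_rec add_ac)
      moreover have "pochhammer (b + of_nat (Suc L)) (Suc k') =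
                       pochhammer (b + 1 + of_nat L) k' * (b + 1 + of_nat L + of_nat k')"
        by (simp add: pochhammer_Suc add_ac)
      ultimately show ?thesis by (simp add: algebra_simps)
    qed
    finally show ?thesis
      using \<open>k = Suc k'\<close> by (simp add: X_def mult.assoc)
  qed
qed

lemma sum_binomial_divide_pochhammer_fact:
  fixes b :: "'a::field_char_0"
  assumes "pochhammer b k \<noteq> 0"
  shows "(\<Sum>n\<le>k. of_nat (L choose n) / (pochhammer b n * fact (k - n))) =
           pochhammer (b + of_nat L) k / (pochhammer b k * fact k)"
proof -
  have "of_nat (L choose n) * of_nat (k choose n) * fact n * pochhammer (b + of_nat n) (k - n) /
          (pochhammer b k * fact k) = of_nat (L choose n) / (pochhammer b n * fact (k - n))" if "n \<le> k" for n
  proof -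
    have split: "pochhammer b k = pochhammer b n * pochhammer (b + of_nat n) (k - n)"
      by (rule pochhammer_product[OF that])
    with assms have "pochhammer b n \<noteq> 0" and "pochhammer (b + of_nat n) (k - n) \<noteq> 0"
      by auto
    moreover have "fact n * of_nat (k choose n) = (fact k / fact (k - n) :: 'a)"
      by (rule fact_binomial[OF that])
    ultimately show ?thesis
      unfolding split by (simp add: field_simps)
  qed
  then show ?thesis
    by (simp add: pochhammer_add_of_nat_eq_sum[of b L k] sum_divide_distrib)
qed

text \<open>The pieces of the Chu--Vandermonde splitting of \<open>(p)\<^sub>k (-\<i>)\<^sup>k / ((\<beta>)\<^sub>k k!)\<close> with
  \<open>k = n + \<nu>\<close>; the parameter \<open>w\<close> stands for \<open>\<beta> + L\<close>.\<close>
definition split_coeff :: "nat \<Rightarrow> complex \<Rightarrow> complex \<Rightarrow> complex \<Rightarrow> nat \<Rightarrow> nat \<Rightarrow> complex" where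
  "split_coeff L p \<beta> w n \<nu> = of_nat (L choose n) * (-\<i>) ^ (n + \<nu>) * pochhammer p (n + \<nu>) /
      (pochhammer \<beta> n * fact \<nu> * pochhammer w (n + \<nu>))"

lemma split_coeff_mult_power:
  "split_coeff L p \<beta> w n \<nu> * X ^ (n + \<nu>) =
     of_nat (L choose n) * (-\<i> * X) ^ n * pochhammer p n / (pochhammer \<beta> n * pochhammer w n) *
     hyp_term (p + of_nat n) (w + of_nat n) (-\<i> * X) \<nu>"
  unfolding split_coeff_def hyp_term_def pochhammer_product' power_mult_distrib
  by (simp add: power_add divide_inverse mult_ac)

lemma sum_split_coeff:
  assumes w: "w = \<beta> + of_nat L" and "pochhammer \<beta> k \<noteq> 0" and "pochhammer w k \<noteq> 0"
  shows "(\<Sum>n\<le>L. if n \<le> k then split_coeff L p \<beta> w n (k - n) else 0) = hyp_term p \<beta> (-\<i>) k"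
proof -
  have "(\<Sum>n\<le>L. if n \<le> k then split_coeff L p \<beta> w n (k - n) else 0) =
          (\<Sum>n\<in>{..L} \<inter> {..k}. split_coeff L p \<beta> w n (k - n))"
    by (subst sum.inter_restrict) auto
  also have "\<dots> = (\<Sum>n\<le>k. split_coeff L p \<beta> w n (k - n))"
    by (rule sum.mono_neutral_left) (auto simp: split_coeff_def)
  also have "\<dots> = (-\<i>) ^ k * pochhammer p k / pochhammer w k *
                    (\<Sum>n\<le>k. of_nat (L choose n) / (pochhammer \<beta> n * fact (k - n)))"
    unfolding sum_distrib_left
    by (rule sum.cong) (auto simp: split_coeff_def divide_inverse mult_ac)
  also have "\<dots> = (-\<i>) ^ k * pochhammer p k / pochhammer w k * (pochhammer w k / (pochhammer \<beta> k * fact k))"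
    using sum_binomial_divide_pochhammer_fact[OF assms(2)] w by simp
  also have "\<dots> = hyp_term p \<beta> (-\<i>) k"
    using assms(3) by (simp add: hyp_term_def)
  finally show ?thesis .
qed

definition split_term ::
    "nat \<Rightarrow> complex \<Rightarrow> complex \<Rightarrow> complex \<Rightarrow> complex \<Rightarrow> complex \<Rightarrow> nat \<Rightarrow> nat \<Rightarrow> nat \<Rightarrow> complex" where
  "split_term L p \<beta> w \<alpha> X n k j =
     (if n \<le> k then split_coeff L p \<beta> w n (k - n) else 0) * hyp_term \<alpha> \<beta> \<i> j * X ^ (k + j) / (w + of_nat (k + j))"

lemma split_term_eq:
  "split_term L p \<beta> w \<alpha> X n k j =
     ((if n \<le> k then split_coeff L p \<beta> w n (k - n) else 0) * X ^ k) *
     (hyp_term \<alpha> \<beta> (\<i> * X) j / (w + of_nat (k + j)))"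
  unfolding split_term_def hyp_term_mult_power by (simp add: power_add mult_ac)

lemma summable_split_term:
  assumes "Re w > 0"
  shows "summable (\<lambda>j. split_term L p \<beta> w \<alpha> X n k j)"
  unfolding split_term_eq by (rule summable_mult[OF summable_hyp_term_divide[OF assms]])

lemma summable_norm_split_coeff_power:
  "summable (\<lambda>k. norm ((if n \<le> k then split_coeff L p \<beta> w n (k - n) else 0) * X ^ k))"
proof -
  define c where
    "c = of_nat (L choose n) * (-\<i> * X) ^ n * pochhammer p n / (pochhammer \<beta> n * pochhammer w n)"
  have "summable (\<lambda>\<nu>. norm (c * hyp_term (p + of_nat n) (w + of_nat n) (-\<i> * X) \<nu>))"
    using summable_mult[OF summable_norm_hyp_term, of "norm c"] by (simp add: norm_mult)
  then have "summable (\<lambda>\<nu>. norm ((if n \<le> \<nu> + n then split_coeff L p \<beta> w n (\<nu> + n - n) else 0) * X ^ (\<nu> + n)))"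
    using split_coeff_mult_power[of L p \<beta> w n _ X] by (simp add: c_def add.commute)
  then show ?thesis
    by (subst (asm) summable_iff_shift)
qed

lemma summable_suminf_split_term:
  assumes w: "Re w > 0"
  shows "summable (\<lambda>k. \<Sum>j. split_term L p \<beta> w \<alpha> X n k j)"
proof -
  define e where "e k = (if n \<le> k then split_coeff L p \<beta> w n (k - n) else 0) * X ^ k" for k
  define V where "V = (\<Sum>j. norm (hyp_term \<alpha> \<beta> (\<i> * X) j) / Re w)"
  have V: "summable (\<lambda>j. norm (hyp_term \<alpha> \<beta> (\<i> * X) j) / Re w)"
    by (rule summable_divide[OF summable_norm_hyp_term])
  have terms: "summable (\<lambda>j. norm (hyp_term \<alpha> \<beta> (\<i> * X) j / (w + of_nat (k + j))))" for k
    by (rule summable_norm_divide_add_of_nat[OF w summable_norm_hyp_term])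
  have bound: "norm (\<Sum>j. hyp_term \<alpha> \<beta> (\<i> * X) j / (w + of_nat (k + j))) \<le> V" for k
  proof -
    have "norm (\<Sum>j. hyp_term \<alpha> \<beta> (\<i> * X) j / (w + of_nat (k + j))) \<le>
            (\<Sum>j. norm (hyp_term \<alpha> \<beta> (\<i> * X) j / (w + of_nat (k + j))))"
      by (rule summable_norm[OF terms])
    also have "\<dots> \<le> V"
      unfolding V_def by (rule suminf_le[OF _ terms V]) (rule norm_divide_add_of_nat_le[OF w])
    finally show ?thesis .
  qed
  have "(\<Sum>j. split_term L p \<beta> w \<alpha> X n k j) =
          e k * (\<Sum>j. hyp_term \<alpha> \<beta> (\<i> * X) j / (w + of_nat (k + j)))" for k
    unfolding split_term_eq e_def by (rule suminf_mult[OF summable_hyp_term_divide[OF w]])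
  then show ?thesis
    using summable_norm_split_coeff_power[of n L p \<beta> w X, folded e_def]
    by (simp only:) (rule summable_comparison_test'[OF summable_mult2[of _ V]],
                     auto simp: norm_mult simp del: of_nat_add intro!: mult_left_mono bound)
qed

lemma suminf_split_terms:
  assumes w: "Re w > 0" and "w = \<beta> + of_nat L" and "\<beta> \<notin> \<int>\<^sub>\<le>\<^sub>0"
  shows "(\<Sum>n\<le>L. \<Sum>k. \<Sum>j. split_term L p \<beta> w \<alpha> X n k j) =
           (\<Sum>k. \<Sum>j. hyp_term p \<beta> (-\<i>) k * hyp_term \<alpha> \<beta> \<i> j * X ^ (k + j) / (w + of_nat (k + j)))"
proof -
  have "pochhammer \<beta> k \<noteq> 0" and "pochhammer w k \<noteq> 0" for k
    using assms(3) Re_pos_not_nonpos_Ints[OF w] pochhammer_eq_0_imp_nonpos_Int by blast+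
  then have "(\<Sum>n\<le>L. split_term L p \<beta> w \<alpha> X n k j) =
               hyp_term p \<beta> (-\<i>) k * hyp_term \<alpha> \<beta> \<i> j * X ^ (k + j) / (w + of_nat (k + j))" for k j
    unfolding split_term_def sum_divide_distrib[symmetric] sum_distrib_right[symmetric]
    using sum_split_coeff[OF assms(2)] by simp
  moreover have "(\<Sum>n\<le>L. \<Sum>k. \<Sum>j. split_term L p \<beta> w \<alpha> X n k j) =
                   (\<Sum>k. \<Sum>j. \<Sum>n\<le>L. split_term L p \<beta> w \<alpha> X n k j)"
    by (simp add: suminf_sum summable_suminf_split_term[OF w] summable_split_term[OF w])
  ultimately show ?thesis
    by simp
qed

lemma sums_split_coeff_shift:
  assumes w: "Re w > 0"
  shows "(\<lambda>\<nu>. split_coeff L p \<beta> w n \<nu> * X ^ (n + \<nu>) *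
                (\<Sum>j. hyp_term \<alpha> \<beta> (\<i> * X) j / (w + of_nat (n + \<nu> + j))))
           sums (\<Sum>k. \<Sum>j. split_term L p \<beta> w \<alpha> X n k j)"
proof -
  define g where "g k = (\<Sum>j. split_term L p \<beta> w \<alpha> X n k j)" for k
  have shifted: "g (\<nu> + n) = split_coeff L p \<beta> w n \<nu> * X ^ (n + \<nu>) *
                      (\<Sum>j. hyp_term \<alpha> \<beta> (\<i> * X) j / (w + of_nat (n + \<nu> + j)))" for \<nu>
    unfolding g_def split_term_eq
    by (subst suminf_mult[OF summable_hyp_term_divide[OF w]]) (simp add: ac_simps)
  have "(\<Sum>i<n. g i) = 0"
    by (simp add: g_def split_term_def)
  moreover have "g sums (\<Sum>k. g k)"
    unfolding g_def by (rule summable_sums[OF summable_suminf_split_term[OF w]])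
  ultimately have "(\<lambda>\<nu>. g (\<nu> + n)) sums (\<Sum>k. g k)"
    by (subst sums_iff_shift) simp
  then show ?thesis
    unfolding shifted unfolding g_def .
qed

lemma Gamma_add_of_nat: "(z::complex) \<notin> \<int>\<^sub>\<le>\<^sub>0 \<Longrightarrow> Gamma (z + of_nat k) = Gamma z * pochhammer z k"
  using pochhammer_Gamma[of z k] Gamma_eq_zero_iff[of z] by (simp add: field_simps)

lemma fE_summand_eq_split_coeff:
  fixes \<alpha> \<beta> \<gamma> X :: complex and l n \<nu> :: nat
  defines "w \<equiv> \<beta> + of_nat l + 1"
  assumes w: "Re w > 0" and \<beta>: "\<beta> \<notin> \<int>\<^sub>\<le>\<^sub>0" and \<alpha>\<gamma>: "\<alpha> + \<gamma> \<notin> \<int>\<^sub>\<le>\<^sub>0"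
  shows "(-\<i> * X) ^ n * Gamma w / Gamma (\<beta> + of_nat n) * of_nat ((l + 1) choose n) *
           (inverse (\<i> / X) ^ \<nu> * Gamma (\<alpha> - 1 + (\<gamma> + of_nat n + 1) + of_nat \<nu>) /
              (fact \<nu> * Gamma (\<beta> + of_nat l + of_nat n + 1 + of_nat \<nu>)) *
            macrobertE [\<alpha> - 1 + 1, \<beta> + of_nat l + of_nat n + 1 + of_nat \<nu>]
              [\<beta>, \<beta> + of_nat l + of_nat n + 1 + 1 + of_nat \<nu>] (\<i> / X)) =
         Gamma \<alpha> / Gamma \<beta> * (Gamma (\<alpha> + \<gamma>) / Gamma \<beta>) *
           (split_coeff (l + 1) (\<alpha> + \<gamma>) \<beta> w n \<nu> * X ^ (n + \<nu>) *
            (\<Sum>j. hyp_term \<alpha> \<beta> (\<i> * X) j / (w + of_nat (n + \<nu> + j))))"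
proof -
  have w_nonpos: "w \<notin> \<int>\<^sub>\<le>\<^sub>0"
    using w by (rule Re_pos_not_nonpos_Ints)
  have nonzero: "pochhammer \<beta> n \<noteq> 0" "pochhammer w (n + \<nu>) \<noteq> 0" "Gamma w \<noteq> 0" "Gamma \<beta> \<noteq> 0"
    using w_nonpos \<beta> pochhammer_eq_0_imp_nonpos_Int by (auto simp: Gamma_eq_zero_iff)
  have "Re (w + of_nat (n + \<nu>)) > 0"
    using w by simp
  from macrobertE_shifted_pair[OF this, of \<alpha> \<beta> "\<i> / X"]
  have macrobert: "macrobertE [\<alpha> - 1 + 1, \<beta> + of_nat l + of_nat n + 1 + of_nat \<nu>]
                     [\<beta>, \<beta> + of_nat l + of_nat n + 1 + 1 + of_nat \<nu>] (\<i> / X) =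
                   Gamma \<alpha> / Gamma \<beta> * (\<Sum>j. hyp_term \<alpha> \<beta> (\<i> * X) j / (w + of_nat (n + \<nu> + j)))"
    by (cases "X = 0") (simp_all add: w_def add_ac)
  have Gamma_num: "Gamma (\<alpha> - 1 + (\<gamma> + of_nat n + 1) + of_nat \<nu>) =
                     Gamma (\<alpha> + \<gamma>) * pochhammer (\<alpha> + \<gamma>) (n + \<nu>)"
    using Gamma_add_of_nat[OF \<alpha>\<gamma>, of "n + \<nu>"] by (simp add: add_ac)
  have Gamma_den: "Gamma (\<beta> + of_nat l + of_nat n + 1 + of_nat \<nu>) = Gamma w * pochhammer w (n + \<nu>)"
    using Gamma_add_of_nat[OF w_nonpos, of "n + \<nu>"] by (simp add: w_def add_ac)
  have inverse_power: "inverse (\<i> / X) ^ \<nu> = (-\<i>) ^ \<nu> * X ^ \<nu>"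
    by (simp add: field_simps flip: power_mult_distrib)
  show ?thesis
    unfolding inverse_power macrobert Gamma_num Gamma_den split_coeff_def Gamma_add_of_nat[OF \<beta>]
      power_add power_mult_distrib
    using nonzero by (simp add: field_simps)
qed

lemma fE_eq_suminf_split_term:
  fixes \<alpha> \<beta> \<gamma> X :: complex and l n :: nat
  defines "w \<equiv> \<beta> + of_nat l + 1"
  assumes w: "Re w > 0" and \<beta>: "\<beta> \<notin> \<int>\<^sub>\<le>\<^sub>0" and \<alpha>\<gamma>: "\<alpha> + \<gamma> \<notin> \<int>\<^sub>\<le>\<^sub>0" and X: "X \<noteq> 0"
    and n: "n \<le> l + 1"
  shows "(-\<i> * X) ^ n * Gamma w / Gamma (\<beta> + of_nat n) * of_nat ((l + 1) choose n) *
           fE (\<alpha> - 1) (\<beta> + of_nat l + of_nat n + 1) (\<gamma> + of_nat n + 1) \<beta> (\<i> / X) =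
         Gamma \<alpha> / Gamma \<beta> * (Gamma (\<alpha> + \<gamma>) / Gamma \<beta>) *
           (\<Sum>k. \<Sum>j. split_term (l + 1) (\<alpha> + \<gamma>) \<beta> w \<alpha> X n k j)"
    (is "?c * fE _ _ _ _ _ = ?K * ?S")
proof -
  define f where "f \<nu> = inverse (\<i> / X) ^ \<nu> * Gamma (\<alpha> - 1 + (\<gamma> + of_nat n + 1) + of_nat \<nu>) /
      (fact \<nu> * Gamma (\<beta> + of_nat l + of_nat n + 1 + of_nat \<nu>)) *
      macrobertE [\<alpha> - 1 + 1, \<beta> + of_nat l + of_nat n + 1 + of_nat \<nu>]
        [\<beta>, \<beta> + of_nat l + of_nat n + 1 + 1 + of_nat \<nu>] (\<i> / X)" for \<nu>
  have "?c \<noteq> 0"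
    using X n Re_pos_not_nonpos_Ints[OF w] \<beta> Gamma_add_of_nat[OF \<beta>, of n]
    by (auto simp: Gamma_eq_zero_iff dest: pochhammer_eq_0_imp_nonpos_Int)
  have sums: "(\<lambda>\<nu>. ?c * f \<nu>) sums (?K * ?S)"
    unfolding f_def fE_summand_eq_split_coeff[OF w[unfolded w_def] \<beta> \<alpha>\<gamma>, folded w_def]
    by (rule sums_mult[OF sums_split_coeff_shift[OF w]])
  then have "summable f"
    using \<open>?c \<noteq> 0\<close> summable_cmult_iff sums_summable by blast
  then show ?thesis
    unfolding fE_def f_def[symmetric] using sums_unique[OF sums] suminf_mult by metis
qed

lemma macrobertE_single_divide:
  "macrobertE [p] [q] (z / T) = Gamma p / Gamma q * (\<Sum>k. hyp_term p q (- inverse z) k * T ^ k)"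
proof -
  have "- 1 / (z / T) = - inverse z * T"
    by (simp add: divide_inverse inverse_mult_distrib)
  then have "hypergeom [p] [q] (- 1 / (z / T)) = (\<Sum>k. hyp_term p q (- inverse z) k * T ^ k)"
    unfolding hypergeom_single by (intro suminf_cong) (simp only: hyp_term_mult_power)
  then show ?thesis
    by (simp only: macrobertE_def list.map prod_list.Cons prod_list.Nil mult_1_right)
qed

lemma antideriv_series_eq_fE_sum:
  fixes \<alpha> \<beta> \<gamma> X :: complex and l :: nat
  defines "w \<equiv> \<beta> + of_nat l + 1"
  assumes w: "Re w > 0" and \<beta>: "\<beta> \<notin> \<int>\<^sub>\<le>\<^sub>0" and \<alpha>\<gamma>: "\<alpha> + \<gamma> \<notin> \<int>\<^sub>\<le>\<^sub>0" and X: "X \<noteq> 0"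
  shows "Gamma \<alpha> / Gamma \<beta> * (Gamma (\<alpha> + \<gamma>) / Gamma \<beta>) *
           (\<Sum>m. antideriv_coeff (hyp_term \<alpha> \<beta> \<i>) (hyp_term (\<alpha> + \<gamma>) \<beta> (-\<i>)) w m * X ^ m) =
         (\<Sum>n\<le>l + 1. (-\<i> * X) ^ n * Gamma w / Gamma (\<beta> + of_nat n) * of_nat ((l + 1) choose n) *
            fE (\<alpha> - 1) (\<beta> + of_nat l + of_nat n + 1) (\<gamma> + of_nat n + 1) \<beta> (\<i> / X))"
proof -
  have "(\<Sum>m. antideriv_coeff (hyp_term \<alpha> \<beta> \<i>) (hyp_term (\<alpha> + \<gamma>) \<beta> (-\<i>)) w m * X ^ m) =
               (\<Sum>k. \<Sum>j. hyp_term (\<alpha> + \<gamma>) \<beta> (-\<i>) k * hyp_term \<alpha> \<beta> \<i> j * X ^ (k + j) / (w + of_nat (k + j)))"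
    by (rule sums_unique[OF sums_antideriv_coeff[OF w summable_norm_hyp_term_mult_power summable_norm_hyp_term_mult_power], symmetric])
  also have "\<dots> = (\<Sum>n\<le>l + 1. \<Sum>k. \<Sum>j. split_term (l + 1) (\<alpha> + \<gamma>) \<beta> w \<alpha> X n k j)"
    by (rule suminf_split_terms[symmetric, OF w _ \<beta>]) (simp add: w_def)
  finally have series: "(\<Sum>m. antideriv_coeff (hyp_term \<alpha> \<beta> \<i>) (hyp_term (\<alpha> + \<gamma>) \<beta> (-\<i>)) w m * X ^ m) =
                        (\<Sum>n\<le>l + 1. \<Sum>k. \<Sum>j. split_term (l + 1) (\<alpha> + \<gamma>) \<beta> w \<alpha> X n k j)" .
  show ?thesis
    unfolding series sum_distrib_left
    by (rule sum.cong[OF refl])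
       (use fE_eq_suminf_split_term[OF w[unfolded w_def] \<beta> \<alpha>\<gamma> X] in \<open>simp add: w_def\<close>)
qed

theorem mainTheorem10:
  fixes l :: nat and \<alpha> \<beta> \<gamma> :: complex and \<rho> :: real
  assumes "Re \<beta> + real l > -1"
    and "\<alpha> \<notin> \<int>\<^sub>\<le>\<^sub>0" and "\<beta> \<notin> \<int>\<^sub>\<le>\<^sub>0" and "\<alpha> + \<gamma> \<notin> \<int>\<^sub>\<le>\<^sub>0"
    and "\<rho> \<noteq> 0"
  shows "has_oriented_integral
           (\<lambda>t. complex_of_real t powr (\<beta> + of_nat l)
                 * macrobertE [\<alpha>] [\<beta>] (\<i> / complex_of_real t)
                 * macrobertE [\<alpha> + \<gamma>] [\<beta>] (- \<i> / complex_of_real t))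
           0 \<rho>
           (complex_of_real \<rho> powr (\<beta> + of_nat l + 1) *
              (\<Sum>n\<le>l + 1. (- \<i> * complex_of_real \<rho>) ^ n * Gamma (\<beta> + of_nat l + 1)
                   / Gamma (\<beta> + of_nat n) * of_nat ((l + 1) choose n)
                   * fE (\<alpha> - 1) (\<beta> + of_nat l + of_nat n + 1) (\<gamma> + of_nat n + 1) \<beta>
                        (\<i> / complex_of_real \<rho>)))"
proof -
  define w where "w = \<beta> + of_nat l + 1"
  define K where "K = Gamma \<alpha> / Gamma \<beta> * (Gamma (\<alpha> + \<gamma>) / Gamma \<beta>)"
  have w: "Re w > 0"
    using assms(1) by (simp add: w_def)
  have integral: "has_oriented_integral
          (\<lambda>t. complex_of_real t powr (\<beta> + of_nat l)
                * macrobertE [\<alpha>] [\<beta>] (\<i> / complex_of_real t)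
                * macrobertE [\<alpha> + \<gamma>] [\<beta>] (- \<i> / complex_of_real t))
          0 \<rho> (K * (complex_of_real \<rho> powr w * (\<Sum>m. antideriv_coeff (hyp_term \<alpha> \<beta> \<i>)
                      (hyp_term (\<alpha> + \<gamma>) \<beta> (-\<i>)) w m * complex_of_real \<rho> ^ m)))"
    by (rule has_oriented_integral_powr_series_product[OF w summable_norm_hyp_term_mult_power
                                                           summable_norm_hyp_term_mult_power])
       (simp only: macrobertE_single_divide, simp add: K_def w_def)
  have "complex_of_real \<rho> \<noteq> 0"
    using assms(5) by simp
  note series = antideriv_series_eq_fE_sum[OF w[unfolded w_def] assms(3,4) this, folded w_def K_def]
  show ?thesis
    using integral
    unfolding mult.left_commute[of K "complex_of_real \<rho> powr w"] series unfolding w_def .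
qed

end
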